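(* For every integer $\chi\geq 3$, $\vec{R}(\chi)\geq \vec{R}(\chi-1)+2$.
   Context: $TT_\ell$ denotes the transitive (acyclic) tournament on $\ell$ vertices, and $\vec{R}(\ell)$ is the least integer $N$ such that every tournament on at least $N$ vertices contains a copy of $TT_\ell$. *)

theory Defs
  imports Main
begin

definition tournament :: "'a set \<Rightarrow> ('a \<Rightarrow> 'a \<Rightarrow> bool) \<Rightarrow> bool" where
  "tournament V T \<longleftrightarrow> finite V \<and>
     (\<forall>u v. T u v \<longrightarrow> u \<in> V \<and> v \<in> V) \<and>
     (\<forall>v\<in>V. \<not> T v v) \<and>
     (\<forall>u\<in>V. \<forall>v\<in>V. u \<noteq> v \<longrightarrow> (T u v \<longleftrightarrow> \<not> T v u))"

definition contains_TT :: "'a set \<Rightarrow> ('a \<Rightarrow> 'a \<Rightarrow> bool) \<Rightarrow> nat \<Rightarrow> bool" where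
  "contains_TT V T l \<longleftrightarrow> (\<exists>f. inj_on f {0..<l} \<and> f ` {0..<l} \<subseteq> V \<and>
     (\<forall>i<l. \<forall>j<l. i < j \<longrightarrow> T (f i) (f j)))"

text \<open>Directed Ramsey number: least N such that every tournament on at least N
  vertices contains TT_l. Vertices are taken from nat (any countable supply suffices).\<close>
definition dir_ramsey :: "nat \<Rightarrow> nat" where
  "dir_ramsey l = (LEAST N. \<forall>(V::nat set) T. tournament V T \<and> card V \<ge> N \<longrightarrow> contains_TT V T l)"

end

theory Submission
  imports Defs
begin

text \<open>Take a tournament on \<open>R(k) - 1\<close> vertices without \<open>TT\<^sub>k\<close> and add a vertex \<open>x\<close>
  beating everything, a vertex \<open>y\<close> beaten by everything, and the arc \<open>y \<rightarrow> x\<close>.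
  A transitive subtournament cannot contain both \<open>x\<close> and \<open>y\<close> together with a third vertex,
  since \<open>x \<rightarrow> v \<rightarrow> y \<rightarrow> x\<close> is a directed triangle; and one avoiding \<open>x\<close> or \<open>y\<close> loses at most
  one vertex when restricted to the old tournament. So the new tournament on \<open>R(k) + 1\<close> vertices
  has no \<open>TT\<^sub>k\<^sub>+\<^sub>1\<close>, whence \<open>R(k + 1) \<ge> R(k) + 2\<close>.\<close>

text \<open>Stated with \<open>l \<le> length xs\<close>, since a longer sorted list contains a copy of \<open>TT\<^sub>l\<close>
  as a prefix; this spares the truncations when vertices are added or removed.\<close>

lemma contains_TT_iff_sorted_list:
  "contains_TT V T l \<longleftrightarrow>
     (\<exists>xs. distinct xs \<and> set xs \<subseteq> V \<and> l \<le> length xs \<and> sorted_wrt T xs)"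
proof
  assume "contains_TT V T l"
  then obtain f where "inj_on f {0..<l}" "f ` {0..<l} \<subseteq> V" "\<forall>i<l. \<forall>j<l. i < j \<longrightarrow> T (f i) (f j)"
    unfolding contains_TT_def by blast
  then show "\<exists>xs. distinct xs \<and> set xs \<subseteq> V \<and> l \<le> length xs \<and> sorted_wrt T xs"
    by (intro exI[of _ "map f [0..<l]"]) (auto simp: distinct_map sorted_wrt_iff_nth_less)
next
  assume "\<exists>xs. distinct xs \<and> set xs \<subseteq> V \<and> l \<le> length xs \<and> sorted_wrt T xs"
  then obtain xs where "distinct xs" "set xs \<subseteq> V" "l \<le> length xs" "sorted_wrt T xs"
    by blast
  then show "contains_TT V T l"
    unfolding contains_TT_def
    by (intro exI[of _ "nth xs"]) (auto simp: inj_on_nth sorted_wrt_iff_nth_less)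
qed

lemma contains_TT_cong:
  assumes "\<And>u w. u \<in> V \<Longrightarrow> w \<in> V \<Longrightarrow> T u w \<longleftrightarrow> T' u w"
  shows "contains_TT V T l \<longleftrightarrow> contains_TT V T' l"
  unfolding contains_TT_iff_sorted_list using assms
  by (metis (mono_tags, lifting) subsetD sorted_wrt_mono_rel)

lemma contains_TT_insert_SucD:
  assumes "contains_TT (insert z W) T (Suc l)"
  shows "contains_TT W T l"
proof -
  obtain xs where xs: "distinct xs" "set xs \<subseteq> insert z W" "Suc l \<le> length xs" "sorted_wrt T xs"
    using assms unfolding contains_TT_iff_sorted_list by blast
  have "l \<le> length (removeAll z xs)"
    using xs(1,3) by (auto simp: distinct_remove1_removeAll[symmetric] length_remove1)
  moreover have "sorted_wrt T (removeAll z xs)"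
    using xs(4) by (simp add: removeAll_filter_not_eq sorted_wrt_filter)
  ultimately show ?thesis
    unfolding contains_TT_iff_sorted_list using xs(1,2)
    by (intro exI[of _ "removeAll z xs"]) (auto simp: distinct_removeAll)
qed

lemma tournament_asymp_on:
  assumes "tournament V T"
  shows "asymp_on V T"
proof (rule asymp_onI)
  fix u v assume "u \<in> V" "v \<in> V" "T u v"
  moreover have "u \<noteq> v"
    using assms \<open>u \<in> V\<close> \<open>T u v\<close> unfolding tournament_def by metis
  ultimately show "\<not> T v u"
    using assms unfolding tournament_def by metis
qed

lemma transp_on_set_if_sorted_wrt:
  assumes sorted: "sorted_wrt T xs" and asym: "asymp_on (set xs) T"
  shows "transp_on (set xs) T"
proof (rule transp_onI)
  have index_less: "i < j" if "i < length xs" "j < length xs" "T (xs ! i) (xs ! j)" for i j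
  proof (rule ccontr)
    assume "\<not> i < j"
    then have "j < i \<or> j = i"
      by linarith
    then have "T (xs ! j) (xs ! i)"
      using sorted_wrt_nth_less[OF sorted _ that(1)] that(3) by auto
    then show False
      using asymp_onD[OF asym _ _ that(3)] that(1,2) by simp
  qed
  fix a b c assume "a \<in> set xs" "b \<in> set xs" "c \<in> set xs" "T a b" "T b c"
  then obtain i j m where ijm: "i < length xs" "j < length xs" "m < length xs"
    "a = xs ! i" "b = xs ! j" "c = xs ! m"
    by (metis in_set_conv_nth)
  then have "i < m"
    using index_less \<open>T a b\<close> \<open>T b c\<close> by (meson order.strict_trans)
  then show "T a c"
    using sorted_wrt_nth_less[OF sorted _ ijm(3)] ijm by simp
qed

lemma contains_TT_if_two_pow_le_card:
  assumes "finite S" and "\<And>u v. u \<in> S \<Longrightarrow> v \<in> S \<Longrightarrow> u \<noteq> v \<Longrightarrow> T u v \<or> T v u"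
    and "2 ^ l \<le> card S"
  shows "contains_TT S T (Suc l)"
  using assms
proof (induction l arbitrary: S)
  case 0
  then obtain v where "v \<in> S"
    by fastforce
  then show ?case
    unfolding contains_TT_iff_sorted_list by (intro exI[of _ "[v]"]) auto
next
  case (Suc l)
  then obtain v where v: "v \<in> S"
    by fastforce
  define Out where "Out = {u \<in> S - {v}. T v u}"
  define In where "In = {u \<in> S - {v}. \<not> T v u}"
  have "card Out + card In = card (S - {v})"
    unfolding Out_def In_def using Suc.prems(1)
    by (subst card_Un_disjoint[symmetric]) (auto intro: arg_cong[where f = card])
  then have "2 ^ l \<le> card Out \<or> 2 ^ l \<le> card In"
    using Suc.prems(3) v by auto
  then show ?case
  proof
    assume "2 ^ l \<le> card Out"
    then obtain xs where xs: "distinct xs" "set xs \<subseteq> Out" "Suc l \<le> length xs" "sorted_wrt T xs"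
      using Suc.IH[of Out] Suc.prems(1,2) unfolding Out_def contains_TT_iff_sorted_list by auto
    then show ?case
      unfolding contains_TT_iff_sorted_list using v
      by (intro exI[of _ "v # xs"]) (auto simp: Out_def)
  next
    assume "2 ^ l \<le> card In"
    then obtain xs where xs: "distinct xs" "set xs \<subseteq> In" "Suc l \<le> length xs" "sorted_wrt T xs"
      using Suc.IH[of In] Suc.prems(1,2) unfolding In_def contains_TT_iff_sorted_list by auto
    moreover have "\<forall>u \<in> set xs. T u v"
      using xs(2) Suc.prems(2) v unfolding In_def by blast
    ultimately show ?case
      unfolding contains_TT_iff_sorted_list using v
      by (intro exI[of _ "xs @ [v]"]) (auto simp: In_def sorted_wrt_append)
  qed
qed

definition source_sink_extension ::
    "'a \<Rightarrow> 'a \<Rightarrow> 'a set \<Rightarrow> ('a \<Rightarrow> 'a \<Rightarrow> bool) \<Rightarrow> 'a \<Rightarrow> 'a \<Rightarrow> bool" where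
  "source_sink_extension x y V T u w \<longleftrightarrow>
     T u w \<or> (u = x \<and> w \<in> V) \<or> (u \<in> V \<and> w = y) \<or> (u = y \<and> w = x)"

lemma tournament_source_sink_extension:
  assumes tour: "tournament V T" and fresh: "x \<notin> V" "y \<notin> V" "x \<noteq> y"
  shows "tournament (insert x (insert y V)) (source_sink_extension x y V T)"
proof -
  have arcs_in_V: "\<forall>u w. T u w \<longrightarrow> u \<in> V \<and> w \<in> V" and irrefl: "\<forall>v\<in>V. \<not> T v v"
    and total: "\<forall>u\<in>V. \<forall>w\<in>V. u \<noteq> w \<longrightarrow> (T u w \<longleftrightarrow> \<not> T w u)" and "finite V"
    using tour unfolding tournament_def by blast+
  show ?thesis
    unfolding tournament_def source_sink_extension_def
    using arcs_in_V irrefl total fresh \<open>finite V\<close> by (intro conjI) blast+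
qed

lemma not_contains_TT_source_sink_extension:
  assumes tour: "tournament V T" and no_TT: "\<not> contains_TT V T k" and "2 \<le> k"
    and fresh: "x \<notin> V" "y \<notin> V" "x \<noteq> y"
  shows "\<not> contains_TT (insert x (insert y V)) (source_sink_extension x y V T) (Suc k)"
proof
  let ?U = "insert x (insert y V)" and ?T' = "source_sink_extension x y V T"
  have arcs_in_V: "T u w \<Longrightarrow> u \<in> V \<and> w \<in> V" for u w
    using tour unfolding tournament_def by blast
  have no_TT': "\<not> contains_TT V ?T' k"
    using no_TT contains_TT_cong[of V T ?T' k] fresh by (auto simp: source_sink_extension_def)
  assume "contains_TT ?U ?T' (Suc k)"
  then obtain xs where xs: "distinct xs" "set xs \<subseteq> ?U" "Suc k \<le> length xs" "sorted_wrt ?T' xs"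
    unfolding contains_TT_iff_sorted_list by blast
  consider "x \<in> set xs" "y \<in> set xs" | "set xs \<subseteq> insert x V" | "set xs \<subseteq> insert y V"
    using xs(2) by blast
  then show False
  proof cases
    case 1
    have "card (set xs) > card {x, y}"
      using xs(1,3) \<open>2 \<le> k\<close> fresh(3) distinct_card[of xs] by simp
    then obtain v where v: "v \<in> set xs" "v \<in> V"
      using xs(2) card_mono[of "{x, y}" "set xs"] by auto
    have "transp_on (set xs) ?T'"
      using transp_on_set_if_sorted_wrt xs(2,4) asymp_on_subset
        tournament_asymp_on[OF tournament_source_sink_extension[OF tour fresh]] by blast
    moreover have "?T' x v" "?T' v y"
      using v(2) by (simp_all add: source_sink_extension_def)
    ultimately have "?T' x y"
      using 1 v(1) by (metis transp_onD)
    then show False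
      using arcs_in_V fresh by (auto simp: source_sink_extension_def)
  next
    case 2
    then have "contains_TT (insert x V) ?T' (Suc k)"
      using xs unfolding contains_TT_iff_sorted_list by blast
    then show False
      using no_TT' by (blast dest: contains_TT_insert_SucD)
  next
    case 3
    then have "contains_TT (insert y V) ?T' (Suc k)"
      using xs unfolding contains_TT_iff_sorted_list by blast
    then show False
      using no_TT' by (blast dest: contains_TT_insert_SucD)
  qed
qed

lemma dir_ramsey_le_card_imp_contains_TT:
  fixes V :: "nat set"
  assumes "1 \<le> l" and "tournament V T" and "dir_ramsey l \<le> card V"
  shows "contains_TT V T l"
proof -
  let ?P = "\<lambda>N. \<forall>(V::nat set) T. tournament V T \<and> card V \<ge> N \<longrightarrow> contains_TT V T l"
  have "?P (2 ^ (l - 1))"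
  proof (intro allI impI)
    fix V :: "nat set" and T assume V: "tournament V T \<and> 2 ^ (l - 1) \<le> card V"
    have total: "T u v \<or> T v u" if "u \<in> V" "v \<in> V" "u \<noteq> v" for u v
      using V that unfolding tournament_def by blast
    have "finite V"
      using V unfolding tournament_def by blast
    with total have "contains_TT V T (Suc (l - 1))"
      using V by (blast intro: contains_TT_if_two_pow_le_card)
    then show "contains_TT V T l"
      using \<open>1 \<le> l\<close> by simp
  qed
  then have "?P (dir_ramsey l)"
    unfolding dir_ramsey_def by (rule LeastI)
  then show ?thesis
    using assms(2,3) by blast
qed

lemma dir_ramsey_extremal_tournament:
  assumes "1 \<le> l"
  obtains V :: "nat set" and T
  where "tournament V T" "\<not> contains_TT V T l" "dir_ramsey l \<le> Suc (card V)"
proof (cases "dir_ramsey l = 0")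
  case True
  have "tournament {} (\<lambda>_ _. False)" "\<not> contains_TT {} (\<lambda>_ _. False) l"
    using assms by (auto simp: tournament_def contains_TT_def)
  with True show ?thesis
    using that by simp
next
  case False
  then have "dir_ramsey l - 1 < dir_ramsey l"
    by simp
  then have "\<not> (\<forall>(V::nat set) T. tournament V T \<and> card V \<ge> dir_ramsey l - 1 \<longrightarrow> contains_TT V T l)"
    unfolding dir_ramsey_def by (rule not_less_Least)
  then obtain V :: "nat set" and T
    where "tournament V T" "\<not> contains_TT V T l" "dir_ramsey l - 1 \<le> card V"
    by blast
  with that show ?thesis
    by simp
qed

theorem proposition5p3:
  fixes \<chi> :: nat
  assumes "\<chi> \<ge> 3"
  shows "dir_ramsey \<chi> \<ge> dir_ramsey (\<chi> - 1) + 2"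
proof -
  obtain k where k: "\<chi> = Suc k" "2 \<le> k"
    using assms by (cases \<chi>) auto
  obtain V :: "nat set" and T where V: "tournament V T" "\<not> contains_TT V T k"
    and dir_ramsey_k: "dir_ramsey k \<le> Suc (card V)"
    using dir_ramsey_extremal_tournament[of k] k(2) by auto
  have "finite V"
    using V(1) by (simp add: tournament_def)
  then obtain x y :: nat where fresh: "x \<notin> V" "y \<notin> V" "x \<noteq> y"
    by (metis ex_new_if_finite finite_insert infinite_UNIV_nat insertCI)
  let ?U = "insert x (insert y V)" and ?T' = "source_sink_extension x y V T"
  have "\<not> contains_TT ?U ?T' \<chi>"
    using not_contains_TT_source_sink_extension[OF V k(2) fresh] k(1) by simp
  then have "card ?U < dir_ramsey \<chi>"
    using dir_ramsey_le_card_imp_contains_TT[of \<chi> ?U ?T'] k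
      tournament_source_sink_extension[OF V(1) fresh] by linarith
  moreover have "card ?U = card V + 2"
    using \<open>finite V\<close> fresh by simp
  ultimately show ?thesis
    using dir_ramsey_k k(1) by simp
qed

end
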